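(* Let $V$ be a real vector space and $C$ a cone in $V$. Suppose $X$ is a decomposably $C$-antichain-convex subset of $V$. (1) If $X$ is $C$-upward, then $X$ is convex. (2) If $X$ is $C$-downward, then $X$ is convex.
   Context: A cone in $V$ is a subset $C$ with $\lambda C\subseteq C$ for all $\lambda>0$ (possibly empty, need not contain $0$). $S\subseteq V$ is $C$-antichain-convex iff for all $x,y\in S$ and $\lambda\in[0,1]$ with $y-x\notin C\cup(-C)$ one has $\lambda x+(1-\lambda)y\in S$. $S$ is decomposably $C$-antichain-convex iff $S=S_1+\dots+S_n$ (Minkowski sum) for finitely many $C$-antichain-convex $S_i\subseteq V$. $S$ is $C$-upward iff $S+C\subseteq S$ (i.e., $x\in S$, $y-x\in C$ imply $y\in S$); $S$ is $C$-downward iff $S-C\subseteq S$. *)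

theory Defs
  imports "HOL-Analysis.Analysis"
begin

definition is_cone :: "'a::real_vector set \<Rightarrow> bool" where
  "is_cone C \<longleftrightarrow> (\<forall>t::real. \<forall>x\<in>C. t > 0 \<longrightarrow> t *\<^sub>R x \<in> C)"

definition antichain_convex :: "'a::real_vector set \<Rightarrow> 'a set \<Rightarrow> bool" where
  "antichain_convex C S \<longleftrightarrow>
     (\<forall>x\<in>S. \<forall>y\<in>S. \<forall>t::real. 0 \<le> t \<and> t \<le> 1 \<and> y - x \<notin> C \<union> uminus ` C
        \<longrightarrow> t *\<^sub>R x + (1 - t) *\<^sub>R y \<in> S)"

fun minkowski_sum :: "'a::real_vector set list \<Rightarrow> 'a set" where
  "minkowski_sum [] = {0}"
| "minkowski_sum (A # As) = {a + b | a b. a \<in> A \<and> b \<in> minkowski_sum As}"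

definition decomp_antichain_convex :: "'a::real_vector set \<Rightarrow> 'a set \<Rightarrow> bool" where
  "decomp_antichain_convex C S \<longleftrightarrow>
     (\<exists>Ss. Ss \<noteq> [] \<and> (\<forall>Si\<in>set Ss. antichain_convex C Si) \<and> S = minkowski_sum Ss)"

definition upward :: "'a::real_vector set \<Rightarrow> 'a set \<Rightarrow> bool" where
  "upward C S \<longleftrightarrow> (\<forall>x\<in>S. \<forall>c\<in>C. x + c \<in> S)"

definition downward :: "'a::real_vector set \<Rightarrow> 'a set \<Rightarrow> bool" where
  "downward C S \<longleftrightarrow> (\<forall>x\<in>S. \<forall>c\<in>C. x - c \<in> S)"

end

theory Submission
  imports Defs
begin

text \<open>A convex combination of two points of a C-antichain-convex set either stays in the set or,
  when the two points are C-comparable, lies above the lower one along a positive multiple of a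
  cone direction. In a Minkowski sum these excesses add up summand by summand, so a convex
  combination of points of the sum lies in the sum plus a finite sum of cone elements; a
  C-upward set absorbs such sums. The downward case is the upward case for the cone -C, which
  induces the same comparability and hence the same antichain-convex sets.\<close>

text \<open>The cone need not be closed under addition, hence the finite sums of cone elements.\<close>
definition up_closure :: "'a::monoid_add set \<Rightarrow> 'a set \<Rightarrow> 'a set" where
  "up_closure C S = {p + sum_list ds | p ds. p \<in> S \<and> set ds \<subseteq> C}"

lemma up_closure_subset_if_upward:
  assumes "upward C X"
  shows "up_closure C X \<subseteq> X"
proof -
  have "p + sum_list ds \<in> X" if "p \<in> X" "set ds \<subseteq> C" for p ds
    using that
  proof (induction ds arbitrary: p)
    case (Cons d ds)
    then have "p + d \<in> X" using assms unfolding upward_def by simp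
    then have "p + d + sum_list ds \<in> X" using Cons by simp
    then show ?case by (simp add: add.assoc)
  qed simp
  then show ?thesis unfolding up_closure_def by blast
qed

lemma subset_up_closure: "S \<subseteq> up_closure C S"
  unfolding up_closure_def by (force intro: exI[of _ "[]"])

lemma add_scaled_cone_in_up_closure:
  assumes "is_cone C" "p \<in> S" "c \<in> C" "0 \<le> t"
  shows "p + t *\<^sub>R c \<in> up_closure C S"
proof (cases "t = 0")
  case True
  then show ?thesis using assms(2) subset_up_closure by auto
next
  case False
  then have "t *\<^sub>R c \<in> C" using assms(1,3,4) unfolding is_cone_def by simp
  then show ?thesis using assms(2) unfolding up_closure_def by (auto intro!: exI[of _ "[t *\<^sub>R c]"])
qed

lemma mem_uminus_image_iff: "(x::'a::group_add) \<in> uminus ` A \<longleftrightarrow> - x \<in> A"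
  by (simp add: image_iff equation_minus_iff)

lemma antichain_convex_combination_in_up_closure:
  assumes "is_cone C" "antichain_convex C A" "a \<in> A" "b \<in> A" "0 \<le> t" "t \<le> 1"
  shows "t *\<^sub>R a + (1 - t) *\<^sub>R b \<in> up_closure C A"
proof -
  consider "b - a \<in> C" | "a - b \<in> C" | "b - a \<notin> C \<union> uminus ` C"
    by (auto simp: mem_uminus_image_iff)
  then show ?thesis
  proof cases
    case 1
    have "t *\<^sub>R a + (1 - t) *\<^sub>R b = a + (1 - t) *\<^sub>R (b - a)"
      by (simp add: algebra_simps)
    then show ?thesis using add_scaled_cone_in_up_closure[OF assms(1,3) 1] assms(6) by simp
  next
    case 2
    have "t *\<^sub>R a + (1 - t) *\<^sub>R b = b + t *\<^sub>R (a - b)"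
      by (simp add: algebra_simps)
    then show ?thesis using add_scaled_cone_in_up_closure[OF assms(1,4) 2] assms(5) by simp
  next
    case 3
    then have "t *\<^sub>R a + (1 - t) *\<^sub>R b \<in> A"
      using assms(2-6) unfolding antichain_convex_def by blast
    then show ?thesis using subset_up_closure by blast
  qed
qed

lemma up_closure_add:
  fixes C :: "'a::comm_monoid_add set"
  assumes "x \<in> up_closure C A" "y \<in> up_closure C B"
  shows "x + y \<in> up_closure C {a + b | a b. a \<in> A \<and> b \<in> B}"
proof -
  obtain a ds b es where "a \<in> A" "b \<in> B" "set ds \<subseteq> C" "set es \<subseteq> C"
    and "x = a + sum_list ds" "y = b + sum_list es"
    using assms unfolding up_closure_def by blast
  then have "x + y = (a + b) + sum_list (ds @ es)" "set (ds @ es) \<subseteq> C"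
    by (simp_all add: algebra_simps)
  with \<open>a \<in> A\<close> \<open>b \<in> B\<close> show ?thesis unfolding up_closure_def by blast
qed

lemma minkowski_sum_convex_combination_in_up_closure:
  assumes "is_cone C" "\<forall>A\<in>set As. antichain_convex C A"
    and "x \<in> minkowski_sum As" "y \<in> minkowski_sum As" "0 \<le> t" "t \<le> 1"
  shows "t *\<^sub>R x + (1 - t) *\<^sub>R y \<in> up_closure C (minkowski_sum As)"
  using assms(2-4)
proof (induction As arbitrary: x y)
  case Nil
  then show ?case using subset_up_closure by (auto simp: algebra_simps)
next
  case (Cons A As)
  then obtain a b a' b' where "a \<in> A" "a' \<in> A" "b \<in> minkowski_sum As" "b' \<in> minkowski_sum As"
    and "x = a + b" "y = a' + b'"
    by auto
  then have split: "t *\<^sub>R x + (1 - t) *\<^sub>R y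
      = (t *\<^sub>R a + (1 - t) *\<^sub>R a') + (t *\<^sub>R b + (1 - t) *\<^sub>R b')"
    by (simp add: algebra_simps)
  have "antichain_convex C A" using Cons.prems(1) by simp
  then have "t *\<^sub>R a + (1 - t) *\<^sub>R a' \<in> up_closure C A"
    using antichain_convex_combination_in_up_closure \<open>a \<in> A\<close> \<open>a' \<in> A\<close> assms(1,5,6)
    by blast
  moreover have "t *\<^sub>R b + (1 - t) *\<^sub>R b' \<in> up_closure C (minkowski_sum As)"
    using Cons \<open>b \<in> minkowski_sum As\<close> \<open>b' \<in> minkowski_sum As\<close> by simp
  ultimately have "(t *\<^sub>R a + (1 - t) *\<^sub>R a') + (t *\<^sub>R b + (1 - t) *\<^sub>R b')
      \<in> up_closure C {a + b | a b. a \<in> A \<and> b \<in> minkowski_sum As}"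
    by (rule up_closure_add)
  then show ?case unfolding split minkowski_sum.simps .
qed

lemma convex_if_upward_decomp_antichain_convex:
  assumes "is_cone C" "decomp_antichain_convex C X" "upward C X"
  shows "convex X"
proof (rule convexI)
  obtain As where As: "\<forall>A\<in>set As. antichain_convex C A" "X = minkowski_sum As"
    using assms(2) unfolding decomp_antichain_convex_def by blast
  fix x y and u v :: real
  assume "x \<in> X" "y \<in> X" "0 \<le> u" "0 \<le> v" "u + v = 1"
  then have "u *\<^sub>R x + (1 - u) *\<^sub>R y \<in> up_closure C X"
    using minkowski_sum_convex_combination_in_up_closure[OF assms(1) As(1)] As(2) by simp
  moreover have "v = 1 - u" using \<open>u + v = 1\<close> by simp
  ultimately show "u *\<^sub>R x + v *\<^sub>R y \<in> X"
    using up_closure_subset_if_upward[OF assms(3)] by blast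
qed

lemma is_cone_uminus: "is_cone C \<Longrightarrow> is_cone (uminus ` C)"
  unfolding is_cone_def by (auto simp: image_iff)

lemma antichain_convex_uminus_iff: "antichain_convex (uminus ` C) S \<longleftrightarrow> antichain_convex C S"
proof -
  have "uminus ` C \<union> uminus ` uminus ` C = C \<union> uminus ` C"
    by (auto simp: image_image)
  then show ?thesis unfolding antichain_convex_def by simp
qed

lemma decomp_antichain_convex_uminus_iff:
  "decomp_antichain_convex (uminus ` C) S \<longleftrightarrow> decomp_antichain_convex C S"
  unfolding decomp_antichain_convex_def antichain_convex_uminus_iff ..

lemma upward_uminus_iff_downward: "upward (uminus ` C) S \<longleftrightarrow> downward C S"
  unfolding upward_def downward_def by auto

theorem theorem2:
  fixes C X :: "'a::real_vector set"
  assumes "is_cone C"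
    and "decomp_antichain_convex C X"
  shows "(upward C X \<longrightarrow> convex X) \<and> (downward C X \<longrightarrow> convex X)"
proof (intro conjI impI)
  assume "upward C X"
  then show "convex X" using convex_if_upward_decomp_antichain_convex assms by blast
next
  assume "downward C X"
  then have "upward (uminus ` C) X" by (simp add: upward_uminus_iff_downward)
  moreover have "decomp_antichain_convex (uminus ` C) X"
    using assms(2) by (simp add: decomp_antichain_convex_uminus_iff)
  ultimately show "convex X"
    using convex_if_upward_decomp_antichain_convex is_cone_uminus[OF assms(1)] by blast
qed

end
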